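(* Let $G$ be a Tanner graph and $t\ge1$ an integer such that every irreducible lift-realizable pseudocodeword of $G$ has all components in $[0,t]$. Then every irreducible lift-realizable pseudocodeword $p=(p_1,\dots,p_n)$ of $G$ with support set $V$ satisfies (a) $w^{AWGN}(p)\ge \frac{2t^2}{(1+t^2)(t-1)+2t}|V|$ and (b) $w^{BSC}(p)\ge \frac1t|V|$.
   Context: A Tanner graph $G$ is a finite bipartite graph with variable nodes $v_1,\dots,v_n$ and check nodes; its code consists of all $x\in\{0,1\}^n$ with every check node having an even number of neighbours $v_i$ with $x_i=1$. A degree-$\ell$ lift replaces each node by $\ell$ copies and each edge by a perfect matching between copy-sets; a lift-realizable pseudocodeword $p\in\mathbb{Z}_{\ge0}^n$ is obtained from a codeword of the code of a finite lift by letting $p_i$ be the number of copies of $v_i$ assigned 1; it is irreducible if it is not a sum of two or more nonzero codewords/pseudocodewords. The support of $p$ is $\{i:p_i\neq0\}$. For nonzero $p$, with $e$ the smallest number such that the sum of the $e$ largest $p_i$ is at least $\frac12\sum_ip_i$, $w^{BSC}(p)=2e$ if equality holds and $2e-1$ otherwise; $w^{AWGN}(p)=(\sum_ip_i)^2/\sum_ip_i^2$. *)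

theory Defs
  imports Complex_Main
begin

text \<open>A Tanner graph is given by n variable nodes 0..<n, m check nodes 0..<m and an
  edge relation E i j (variable i adjacent to check j).  Vectors indexed by variable
  nodes are functions nat => nat that vanish outside {..<n}.\<close>

text \<open>A degree-l lift: each edge (i,j) is replaced by a perfect matching pi i j between
  the copies {..<l} of v_i and the copies {..<l} of c_j (copy a of v_i is joined to
  copy pi i j a of c_j).  x i a says copy a of v_i is assigned 1.  x is a codeword of the
  lift iff every copy b of every check c_j has an even number of neighbours assigned 1.\<close>
definition lift_codeword ::
  "nat \<Rightarrow> nat \<Rightarrow> (nat \<Rightarrow> nat \<Rightarrow> bool) \<Rightarrow> nat \<Rightarrow> (nat \<Rightarrow> nat \<Rightarrow> nat \<Rightarrow> nat)
   \<Rightarrow> (nat \<Rightarrow> nat \<Rightarrow> bool) \<Rightarrow> bool" where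
  "lift_codeword n m E l \<pi> x \<longleftrightarrow>
     (\<forall>i<n. \<forall>j<m. E i j \<longrightarrow> bij_betw (\<pi> i j) {..<l} {..<l}) \<and>
     (\<forall>j<m. \<forall>b<l. even (card {i. i < n \<and> E i j \<and> (\<exists>a<l. \<pi> i j a = b \<and> x i a)}))"

definition lift_pseudocodeword ::
  "nat \<Rightarrow> nat \<Rightarrow> (nat \<Rightarrow> nat \<Rightarrow> bool) \<Rightarrow> (nat \<Rightarrow> nat) \<Rightarrow> bool" where
  "lift_pseudocodeword n m E p \<longleftrightarrow>
     (\<exists>l \<pi> x. l \<ge> 1 \<and> lift_codeword n m E l \<pi> x \<and>
        (\<forall>i. p i = (if i < n then card {a. a < l \<and> x i a} else 0)))"

text \<open>Irreducible: nonzero and not a sum of two or more nonzero lift-realizable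
  pseudocodewords (codewords are the degree-1 case).\<close>
definition irreducible_pcw ::
  "nat \<Rightarrow> nat \<Rightarrow> (nat \<Rightarrow> nat \<Rightarrow> bool) \<Rightarrow> (nat \<Rightarrow> nat) \<Rightarrow> bool" where
  "irreducible_pcw n m E p \<longleftrightarrow>
     lift_pseudocodeword n m E p \<and> p \<noteq> (\<lambda>_. 0) \<and>
     \<not> (\<exists>qs. length qs \<ge> 2 \<and>
            (\<forall>q\<in>set qs. lift_pseudocodeword n m E q \<and> q \<noteq> (\<lambda>_. 0)) \<and>
            p = (\<lambda>i. \<Sum>q\<leftarrow>qs. q i))"

definition support :: "nat \<Rightarrow> (nat \<Rightarrow> nat) \<Rightarrow> nat set" where
  "support n p = {i. i < n \<and> p i \<noteq> 0}"

definition w_AWGN :: "nat \<Rightarrow> (nat \<Rightarrow> nat) \<Rightarrow> real" where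
  "w_AWGN n p = (real (\<Sum>i<n. p i))\<^sup>2 / real (\<Sum>i<n. (p i)\<^sup>2)"

definition top_sum :: "nat \<Rightarrow> (nat \<Rightarrow> nat) \<Rightarrow> nat \<Rightarrow> nat" where
  "top_sum n p e = Max {sum p S | S. S \<subseteq> {..<n} \<and> card S = e}"

definition w_BSC :: "nat \<Rightarrow> (nat \<Rightarrow> nat) \<Rightarrow> nat" where
  "w_BSC n p =
     (let e = (LEAST e. e \<le> n \<and> 2 * top_sum n p e \<ge> (\<Sum>i<n. p i))
      in if 2 * top_sum n p e = (\<Sum>i<n. p i) then 2 * e else 2 * e - 1)"

end

theory Submission
  imports Defs
begin

(* AWGN: on the support V, (p i - 1)(t - p i) >= 0 bounds sum p i^2 by (1 + t) S - t |V|
   with S = sum p i, and AM-GM turns this into S^2 / sum p i^2 >= 4 t / (1 + t)^2 |V|,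
   which dominates the stated constant for integer t.
   BSC: the e largest components sum to some T <= e t, and the support has at most e
   elements among them and at most S - T <= T elements elsewhere. *)

lemma sum_squares_le_of_bounded:
  fixes f :: "'a \<Rightarrow> real"
  assumes "\<And>i. i \<in> V \<Longrightarrow> 1 \<le> f i \<and> f i \<le> t"
  shows "(\<Sum>i\<in>V. (f i)\<^sup>2) \<le> (1 + t) * (\<Sum>i\<in>V. f i) - t * real (card V)"
proof -
  have "(\<Sum>i\<in>V. (f i)\<^sup>2) \<le> (\<Sum>i\<in>V. (1 + t) * f i - t)"
  proof (rule sum_mono)
    fix i assume "i \<in> V"
    then have "0 \<le> (f i - 1) * (t - f i)" using assms by simp
    then show "(f i)\<^sup>2 \<le> (1 + t) * f i - t" by (simp add: power2_eq_square algebra_simps)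
  qed
  then show ?thesis by (simp add: sum_subtractf sum_distrib_left mult.commute)
qed

lemma square_ratio_ge:
  fixes S Q k t :: real
  assumes "t \<ge> 0" "k \<ge> 0" "Q > 0" "Q \<le> (1 + t) * S - t * k"
  shows "4 * t / (1 + t)\<^sup>2 * k \<le> S\<^sup>2 / Q"
proof -
  have "4 * t * k * Q \<le> 4 * t * k * ((1 + t) * S - t * k)"
    using assms by (intro mult_left_mono) auto
  also have "\<dots> \<le> (1 + t)\<^sup>2 * S\<^sup>2"
  proof -
    have "0 \<le> ((1 + t) * S - 2 * t * k)\<^sup>2" by simp
    then show ?thesis by (simp add: power2_eq_square algebra_simps)
  qed
  finally show ?thesis using assms by (simp add: field_simps)
qed

lemma awgn_constant_le:
  fixes t :: real
  assumes "t = 1 \<or> t \<ge> 2"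
  shows "2 * t\<^sup>2 / ((1 + t\<^sup>2) * (t - 1) + 2 * t) \<le> 4 * t / (1 + t)\<^sup>2"
proof -
  have t1: "t \<ge> 1" using assms by auto
  have pos: "(1 + t\<^sup>2) * (t - 1) + 2 * t > 0"
    using t1 by (intro add_nonneg_pos mult_nonneg_nonneg) auto
  have "0 \<le> 2 * t * ((t - 1)\<^sup>2 * (t - 2))" using assms by auto
  also have "\<dots> = 4 * t * ((1 + t\<^sup>2) * (t - 1) + 2 * t) - 2 * t\<^sup>2 * (1 + t)\<^sup>2"
    by (simp add: power2_eq_square algebra_simps)
  finally show ?thesis using pos t1 by (simp add: divide_simps)
qed

lemma support_subset: "support n p \<subseteq> {..<n}"
  by (auto simp: support_def)

lemma finite_support [simp]: "finite (support n p)"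
  using finite_subset[OF support_subset] by blast

lemma sum_support: "(\<Sum>i\<in>support n p. f i) = (\<Sum>i<n. f i)" if "\<And>i. p i = 0 \<Longrightarrow> f i = 0"
  by (rule sum.mono_neutral_left) (auto simp: support_def that)

lemma w_AWGN_ge_card_support:
  assumes "\<forall>i<n. p i \<le> t" "support n p \<noteq> {}"
  shows "4 * real t / (1 + real t)\<^sup>2 * real (card (support n p)) \<le> w_AWGN n p"
  unfolding w_AWGN_def
proof (rule square_ratio_ge)
  define V where "V = support n p"
  have "real (\<Sum>i<n. (p i)\<^sup>2) = (\<Sum>i\<in>V. (real (p i))\<^sup>2)"
    by (simp add: sum_support V_def)
  also have "\<dots> \<le> (1 + real t) * (\<Sum>i\<in>V. real (p i)) - real t * real (card V)"
    using assms(1) by (intro sum_squares_le_of_bounded) (auto simp: V_def support_def)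
  also have "(\<Sum>i\<in>V. real (p i)) = real (\<Sum>i<n. p i)"
    by (simp add: sum_support V_def)
  finally show "real (\<Sum>i<n. (p i)\<^sup>2) \<le> (1 + real t) * real (\<Sum>i<n. p i) - real t * real (card V)"
    by simp
  obtain i where "i \<in> V" using assms(2) V_def by blast
  then have "0 < (\<Sum>i\<in>V. (p i)\<^sup>2)"
    by (intro sum_pos2) (auto simp: V_def support_def)
  then have "0 < (\<Sum>i<n. (p i)\<^sup>2)" by (simp add: sum_support V_def)
  then show "0 < real (\<Sum>i<n. (p i)\<^sup>2)" by (simp only: of_nat_0_less_iff)
qed auto

lemma top_sum_attained:
  assumes "e \<le> n"
  obtains A where "A \<subseteq> {..<n}" "card A = e" "top_sum n p e = sum p A"
proof -
  let ?sets = "{A. A \<subseteq> {..<n} \<and> card A = e}"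
  have eq: "{sum p A | A. A \<subseteq> {..<n} \<and> card A = e} = sum p ` ?sets" by blast
  have "finite ?sets" by (rule finite_subset[of _ "Pow {..<n}"]) auto
  moreover have "?sets \<noteq> {}"
    using obtain_subset_with_card_n[of e "{..<n}"] assms by auto
  ultimately have "top_sum n p e \<in> sum p ` ?sets"
    unfolding top_sum_def eq by (intro Max_in) auto
  then show thesis using that by blast
qed

lemma top_sum_0: "top_sum n p 0 = 0"
proof -
  obtain A where "A \<subseteq> {..<n}" "card A = 0" "top_sum n p 0 = sum p A"
    using top_sum_attained by blast
  then show ?thesis using finite_subset[of A "{..<n}"] by simp
qed

lemma top_sum_full: "top_sum n p n = (\<Sum>i<n. p i)"
proof -
  obtain A where "A \<subseteq> {..<n}" "card A = n" "top_sum n p n = sum p A"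
    using top_sum_attained by blast
  then show ?thesis using card_subset_eq[of "{..<n}" A] by simp
qed

lemma card_support_le:
  assumes "finite A"
  shows "card (support n p) \<le> card A + sum p ({..<n} - A)"
proof -
  let ?V = "support n p"
  have "card ?V \<le> card (?V \<inter> A) + card (?V - A)"
    using card_Un_le[of "?V \<inter> A" "?V - A"] by (simp add: Int_Diff_Un)
  also have "card (?V \<inter> A) \<le> card A" using assms by (simp add: card_mono)
  also have "card (?V - A) = (\<Sum>i\<in>?V - A. 1)" by simp
  also have "\<dots> \<le> (\<Sum>i\<in>?V - A. p i)" by (rule sum_mono) (auto simp: support_def)
  also have "\<dots> \<le> sum p ({..<n} - A)" by (rule sum_mono2) (auto simp: support_def)
  finally show ?thesis by simp
qed

lemma bsc_weight_bound:
  fixes k e S T t :: nat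
  assumes "t \<ge> 1" "e \<ge> 1" "T \<le> e * t" "S \<le> 2 * T" "k \<le> e + (S - T)"
  shows "k \<le> t * (if 2 * T = S then 2 * e else 2 * e - 1)"
proof -
  have "e + t \<le> e * t + 1"
    using assms(1,2) by (cases e; cases t) auto
  then show ?thesis using assms by (auto simp: algebra_simps)
qed

lemma card_support_le_w_BSC:
  assumes "t \<ge> 1" "\<forall>i<n. p i \<le> t" "support n p \<noteq> {}"
  shows "card (support n p) \<le> t * w_BSC n p"
proof -
  define S where "S = (\<Sum>i<n. p i)"
  define e where "e = (LEAST e. e \<le> n \<and> S \<le> 2 * top_sum n p e)"
  have e: "e \<le> n \<and> S \<le> 2 * top_sum n p e"
    unfolding e_def by (rule LeastI[of _ n]) (simp add: top_sum_full S_def)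
  then obtain A where A: "A \<subseteq> {..<n}" "card A = e" "top_sum n p e = sum p A"
    using top_sum_attained by blast
  have "0 < (\<Sum>i\<in>support n p. p i)"
    using assms(3) by (intro sum_pos) (auto simp: support_def)
  then have "S > 0" by (simp add: sum_support S_def)
  have "e \<ge> 1"
  proof (rule ccontr)
    assume "\<not> e \<ge> 1"
    then have "e = 0" by simp
    then have "S \<le> 0" using e by (simp add: top_sum_0)
    with \<open>S > 0\<close> show False by simp
  qed
  have top: "sum p A \<le> e * t"
    using sum_mono[of A p "\<lambda>_. t"] A assms(2) by auto
  have "S = sum p A + sum p ({..<n} - A)"
    unfolding S_def using sum.subset_diff[OF A(1) finite_lessThan, of p] by linarith
  moreover have "card (support n p) \<le> e + sum p ({..<n} - A)"
    using card_support_le[of A n p] finite_subset[OF A(1)] A(2) by simp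
  ultimately have card: "card (support n p) \<le> e + (S - sum p A)" by simp
  have "S \<le> 2 * sum p A" using e A(3) by simp
  then have "card (support n p) \<le> t * (if 2 * sum p A = S then 2 * e else 2 * e - 1)"
    by (rule bsc_weight_bound[OF assms(1) \<open>e \<ge> 1\<close> top _ card])
  also have "(if 2 * sum p A = S then 2 * e else 2 * e - 1) = w_BSC n p"
    unfolding w_BSC_def Let_def S_def[symmetric] e_def[symmetric] A(3) ..
  finally show ?thesis .
qed

lemma irreducible_pcw_support_nonempty:
  assumes "irreducible_pcw n m E p"
  shows "support n p \<noteq> {}"
proof -
  obtain i where "p i \<noteq> 0"
    using assms unfolding irreducible_pcw_def by auto
  moreover have "p i = 0" if "\<not> i < n"
    using assms that unfolding irreducible_pcw_def lift_pseudocodeword_def by auto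
  ultimately show ?thesis unfolding support_def by auto
qed

theorem lemma3:
  fixes n m t :: nat and E :: "nat \<Rightarrow> nat \<Rightarrow> bool" and p :: "nat \<Rightarrow> nat"
  assumes "t \<ge> 1"
    and "\<forall>q. irreducible_pcw n m E q \<longrightarrow> (\<forall>i<n. q i \<le> t)"
    and "irreducible_pcw n m E p"
  shows "w_AWGN n p \<ge> 2 * (real t)\<^sup>2 / ((1 + (real t)\<^sup>2) * (real t - 1) + 2 * real t)
            * real (card (support n p)) \<and>
         real (w_BSC n p) \<ge> real (card (support n p)) / real t"
proof
  have bounded: "\<forall>i<n. p i \<le> t" using assms(2,3) by blast
  have nonempty: "support n p \<noteq> {}" using assms(3) by (rule irreducible_pcw_support_nonempty)
  have "real t = 1 \<or> real t \<ge> 2" using assms(1) by auto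
  then have "2 * (real t)\<^sup>2 / ((1 + (real t)\<^sup>2) * (real t - 1) + 2 * real t)
      * real (card (support n p)) \<le> 4 * real t / (1 + real t)\<^sup>2 * real (card (support n p))"
    by (intro mult_right_mono awgn_constant_le) auto
  also have "\<dots> \<le> w_AWGN n p" using bounded nonempty by (rule w_AWGN_ge_card_support)
  finally show "w_AWGN n p \<ge> 2 * (real t)\<^sup>2 / ((1 + (real t)\<^sup>2) * (real t - 1) + 2 * real t)
      * real (card (support n p))" .
  have "real (card (support n p)) \<le> real t * real (w_BSC n p)"
    using card_support_le_w_BSC[OF assms(1) bounded nonempty] by (simp flip: of_nat_mult)
  then show "real (w_BSC n p) \<ge> real (card (support n p)) / real t"
    using assms(1) by (simp add: divide_simps mult.commute)
qed

end
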